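(* Let $\tau=\{\tau_1,\dots,\tau_n\}$ be an implicit-deadline sporadic task set with $\tau_i=(T_i,C_i,T_i)$, $T_i$ positive integers and $0<C_i\le T_i$, and let $m$ be a positive integer. Then $\tau$ is schedulable on $m$ identical unit-capacity processors by the VC-IDT algorithm if and only if $$\sum_{i=1}^n\frac{C_i}{T_i}\le m.$$
   Context: Sporadic task $\tau_i=(T_i,C_i,T_i)$: it releases jobs at arbitrary real times separated by at least $T_i$. Each job needs at most $C_i$ units of execution within $T_i$ time units of its release, and never executes on two processors simultaneously. VC-IDT algorithm: - Let $\Pi=\gcd(T_1,\dots,T_n)$ and $\Theta_i=\Pi C_i/T_i$. - For each $i$ create a periodic server task $(\Pi,\Theta_i,\Pi)$; this is the MPR interface $\langle\Pi,\Theta_i,1\rangle$ of a one-processor virtual cluster containing only $\tau_i$. - Schedule the server tasks on the $m$ processors with McNaughton's algorithm. In every window $(j\Pi,(j+1)\Pi]$, taking the servers in a fixed order, fill processor $1$ starting at $j\Pi$. When processor $p$ is filled up to $(j+1)\Pi$, the rest of the current server's $\Theta_i$ units go on processor $p+1$ starting at $j\Pi$. - Whenever server $i$ is scheduled, the processor time it receives is used to execute pending jobs of $\tau_i$ in earliest-deadline-first order. $\tau$ is schedulable by VC-IDT if this procedure produces a valid schedule on $m$ processors in which every job of every admissible arrival sequence meets its deadline. *)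

theory Defs
  imports "HOL-Analysis.Analysis"
begin

text \<open>A task set with n tasks, indexed 0..n-1: task i = (T i, C i, T i).
  Periods are positive integers, worst-case execution times are reals.\<close>

definition Pi_gcd :: "nat \<Rightarrow> (nat \<Rightarrow> nat) \<Rightarrow> nat" where
  "Pi_gcd n T = Gcd (T ` {..<n})"

definition Theta :: "nat \<Rightarrow> (nat \<Rightarrow> nat) \<Rightarrow> (nat \<Rightarrow> real) \<Rightarrow> nat \<Rightarrow> real" where
  "Theta n T C i = real (Pi_gcd n T) * C i / real (T i)"

text \<open>Offset of server i on the McNaughton "stacked line" of length (number of processors) * Pi:
  servers are taken in the fixed order 0,1,...,n-1.\<close>
definition offs :: "nat \<Rightarrow> (nat \<Rightarrow> nat) \<Rightarrow> (nat \<Rightarrow> real) \<Rightarrow> nat \<Rightarrow> real" where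
  "offs n T C i = (\<Sum>k<i. Theta n T C k)"

text \<open>McNaughton schedule of the server tasks: server i runs on processor p (0-indexed) at time t
  iff, writing u = t - j*Pi for the window j containing t, the point p*Pi + u of the stacked line
  lies in the segment [offs i, offs i + Theta i). Windows are indexed by all integers j.\<close>
definition runs :: "nat \<Rightarrow> (nat \<Rightarrow> nat) \<Rightarrow> (nat \<Rightarrow> real) \<Rightarrow> nat \<Rightarrow> nat \<Rightarrow> real \<Rightarrow> bool" where
  "runs n T C i p t = (let P = real (Pi_gcd n T); x = real p * P + (t - P * of_int \<lfloor>t / P\<rfloor>) in
     i < n \<and> offs n T C i \<le> x \<and> x < offs n T C i + Theta n T C i)"

definition valid_on :: "nat \<Rightarrow> (nat \<Rightarrow> nat) \<Rightarrow> (nat \<Rightarrow> real) \<Rightarrow> nat \<Rightarrow> bool" where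
  "valid_on n T C m =
     ((\<forall>i p t. runs n T C i p t \<longrightarrow> p < m) \<and>
      (\<forall>i p q t. runs n T C i p t \<and> runs n T C i q t \<longrightarrow> p = q) \<and>
      (\<forall>i k p t. runs n T C i p t \<and> runs n T C k p t \<longrightarrow> i = k))"

definition server_supply :: "nat \<Rightarrow> (nat \<Rightarrow> nat) \<Rightarrow> (nat \<Rightarrow> real) \<Rightarrow> nat \<Rightarrow> real set" where
  "server_supply n T C i = {t. \<exists>p. runs n T C i p t}"

text \<open>Admissible arrival sequence of task i: job k released at r k with demand e k;
  consecutive releases separated by at least T i; demands between 0 and C i.
  (Finite sequences are covered by jobs with zero demand.)\<close>
definition admissible :: "(nat \<Rightarrow> nat) \<Rightarrow> (nat \<Rightarrow> real) \<Rightarrow> nat \<Rightarrow> (nat \<Rightarrow> real) \<Rightarrow> (nat \<Rightarrow> real) \<Rightarrow> bool" where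
  "admissible T C i r e = ((\<forall>k. r k + real (T i) \<le> r (Suc k)) \<and> (\<forall>k. 0 \<le> e k \<and> e k \<le> C i))"

text \<open>A job schedule sigma for task i: sigma t = Some k means job k executes at t.
  Work received by job k strictly before t:\<close>
definition work :: "(real \<Rightarrow> nat option) \<Rightarrow> nat \<Rightarrow> real \<Rightarrow> ennreal" where
  "work \<sigma> k t = emeasure lebesgue {s. s < t \<and> \<sigma> s = Some k}"

definition pending :: "(nat \<Rightarrow> real) \<Rightarrow> (nat \<Rightarrow> real) \<Rightarrow> (real \<Rightarrow> nat option) \<Rightarrow> nat \<Rightarrow> real \<Rightarrow> bool" where
  "pending r e \<sigma> k t = (r k \<le> t \<and> work \<sigma> k t < ennreal (e k))"

definition edf_sched :: "nat \<Rightarrow> (nat \<Rightarrow> nat) \<Rightarrow> (nat \<Rightarrow> real) \<Rightarrow> nat \<Rightarrow> (nat \<Rightarrow> real) \<Rightarrow> (nat \<Rightarrow> real)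
                          \<Rightarrow> (real \<Rightarrow> nat option) \<Rightarrow> bool" where
  "edf_sched n T C i r e \<sigma> =
     ((\<forall>t k. \<sigma> t = Some k \<longrightarrow> t \<in> server_supply n T C i \<and> pending r e \<sigma> k t \<and>
              (\<forall>k'. pending r e \<sigma> k' t \<longrightarrow> r k + real (T i) \<le> r k' + real (T i))) \<and>
      (\<forall>t. t \<in> server_supply n T C i \<and> (\<exists>k. pending r e \<sigma> k t) \<longrightarrow> \<sigma> t \<noteq> None))"

definition meets_deadlines :: "(nat \<Rightarrow> nat) \<Rightarrow> nat \<Rightarrow> (nat \<Rightarrow> real) \<Rightarrow> (nat \<Rightarrow> real) \<Rightarrow> (real \<Rightarrow> nat option) \<Rightarrow> bool" where
  "meets_deadlines T i r e \<sigma> =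
     (\<forall>k. ennreal (e k) \<le> emeasure lebesgue {s. s \<le> r k + real (T i) \<and> \<sigma> s = Some k})"

definition VC_IDT_schedulable :: "nat \<Rightarrow> (nat \<Rightarrow> nat) \<Rightarrow> (nat \<Rightarrow> real) \<Rightarrow> nat \<Rightarrow> bool" where
  "VC_IDT_schedulable n T C m =
     (valid_on n T C m \<and>
      (\<forall>i<n. \<forall>r e \<sigma>. admissible T C i r e \<and> edf_sched n T C i r e \<sigma> \<longrightarrow> meets_deadlines T i r e \<sigma>))"

end

theory Submission
  imports Defs
begin

text \<open>McNaughton's wrap-around lays the budgets \<open>\<Theta>\<^sub>i \<le> \<Pi>\<close> end to end on a line made of \<open>m\<close>
  processor windows of length \<open>\<Pi>\<close>; this is a valid schedule exactly when their total
  \<open>\<Pi> \<Sum>\<^sub>i C\<^sub>i/T\<^sub>i\<close> fits, i.e. when the utilization is at most \<open>m\<close>. Server \<open>i\<close> then receives exactly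
  \<open>\<Theta>\<^sub>i\<close> units in every interval of length \<open>\<Pi>\<close> and, as \<open>\<Pi>\<close> divides \<open>T\<^sub>i\<close>, exactly \<open>C\<^sub>i\<close> units in every
  interval of length \<open>T\<^sub>i\<close>. Under EDF, once the earlier jobs of \<open>\<tau>\<^sub>i\<close> are finished, a job is the
  only pending one, so it consumes all the supply from its release on and, needing at most
  \<open>C\<^sub>i\<close> units, completes within \<open>T\<^sub>i\<close>; this is an induction over the jobs.\<close>

section \<open>Periodic supply\<close>

definition periodic_supply :: "real \<Rightarrow> real \<Rightarrow> real \<Rightarrow> real set" where
  "periodic_supply P a \<Theta> = {t. \<exists>j::int. t + of_int j * P \<in> {a..<a + \<Theta>}}"

lemma periodic_supply_borel: "periodic_supply P a \<Theta> \<in> sets borel"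
proof -
  have "periodic_supply P a \<Theta> = (\<Union>j::int. {a - of_int j * P..<a + \<Theta> - of_int j * P})"
    unfolding periodic_supply_def by (auto simp: algebra_simps)
  also have "\<dots> \<in> sets borel" by (intro sets.countable_UN') auto
  finally show ?thesis .
qed

lemma emeasure_periodic_supply_window:
  assumes P: "0 < P" and \<Theta>: "0 \<le> \<Theta>" "\<Theta> \<le> P"
  shows "emeasure lborel (periodic_supply P a \<Theta> \<inter> {b..<b + P}) = ennreal \<Theta>"
proof -
  define j\<^sub>0 where "j\<^sub>0 = \<lfloor>(a - b) / P\<rfloor>"
  define s where "s = a - of_int j\<^sub>0 * P"
  have "of_int j\<^sub>0 * P \<le> a - b" "a - b < (of_int j\<^sub>0 + 1) * P"
    unfolding j\<^sub>0_def using floor_divide_lower floor_divide_upper P by blast+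
  then have s: "b \<le> s" "s < b + P" unfolding s_def by (simp_all add: algebra_simps)
  \<comment> \<open>Inside the window the supply consists of the segment starting at \<open>s\<close> and, possibly,
    the tail of the previous period wrapping around to the start of the window.\<close>
  have mem: "t \<in> periodic_supply P a \<Theta> \<longleftrightarrow> t \<in> {s..<s + \<Theta>} \<or> t < s - P + \<Theta>"
    if t: "b \<le> t" "t < b + P" for t
  proof
    assume "t \<in> periodic_supply P a \<Theta>"
    then obtain j :: int where j: "a \<le> t + of_int j * P" "t + of_int j * P < a + \<Theta>"
      unfolding periodic_supply_def by auto
    have "of_int (j\<^sub>0 - j) * P < 1 * P" "of_int (j - j\<^sub>0) * P < 2 * P"
      using j t s \<Theta> unfolding s_def by (simp_all add: algebra_simps)
    then have "of_int (j\<^sub>0 - j) < (1::real)" "of_int (j - j\<^sub>0) < (2::real)"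
      using P by (simp_all only: mult_less_cancel_right_pos)
    then have "j = j\<^sub>0 \<or> j = j\<^sub>0 + 1" by linarith
    then show "t \<in> {s..<s + \<Theta>} \<or> t < s - P + \<Theta>"
      using j unfolding s_def by (auto simp: algebra_simps)
  next
    assume "t \<in> {s..<s + \<Theta>} \<or> t < s - P + \<Theta>"
    then have "t + of_int j\<^sub>0 * P \<in> {a..<a + \<Theta>} \<or> t + of_int (j\<^sub>0 + 1) * P \<in> {a..<a + \<Theta>}"
      using s t unfolding s_def by (auto simp: algebra_simps)
    then show "t \<in> periodic_supply P a \<Theta>" unfolding periodic_supply_def by blast
  qed
  show ?thesis
  proof (cases "s + \<Theta> \<le> b + P")
    case True
    then have "periodic_supply P a \<Theta> \<inter> {b..<b + P} = {s..<s + \<Theta>}"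
      using mem s \<Theta> by auto
    then show ?thesis using \<Theta> by simp
  next
    case False
    then have "periodic_supply P a \<Theta> \<inter> {b..<b + P} = {b..<s - P + \<Theta>} \<union> {s..<b + P}"
      using mem s \<Theta> by auto
    moreover have "emeasure lborel ({b..<s - P + \<Theta>} \<union> {s..<b + P})
        = emeasure lborel {b..<s - P + \<Theta>} + emeasure lborel {s..<b + P}"
      using \<Theta> by (intro plus_emeasure[symmetric]) auto
    moreover have "ennreal (s - P + \<Theta> - b) + ennreal (b + P - s) = ennreal \<Theta>"
      using False s by (subst ennreal_plus[symmetric]) auto
    ultimately show ?thesis using False s by simp
  qed
qed

lemma emeasure_periodic_supply_windows:
  assumes P: "0 < P" and \<Theta>: "0 \<le> \<Theta>" "\<Theta> \<le> P"
  shows "emeasure lborel (periodic_supply P a \<Theta> \<inter> {b..<b + real N * P}) = ennreal (real N * \<Theta>)"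
proof (induction N)
  case 0
  then show ?case by simp
next
  case (Suc N)
  define b' where "b' = b + real N * P"
  have "b \<le> b'" "b' \<le> b' + P" "b' + P = b + real (Suc N) * P"
    unfolding b'_def using P by (simp_all add: algebra_simps)
  then have "periodic_supply P a \<Theta> \<inter> {b..<b + real (Suc N) * P}
      = (periodic_supply P a \<Theta> \<inter> {b..<b'}) \<union> (periodic_supply P a \<Theta> \<inter> {b'..<b' + P})"
    by (metis Int_Un_distrib ivl_disj_un_two(3))
  moreover have "emeasure lborel ((periodic_supply P a \<Theta> \<inter> {b..<b'}) \<union> (periodic_supply P a \<Theta> \<inter> {b'..<b' + P}))
      = emeasure lborel (periodic_supply P a \<Theta> \<inter> {b..<b'}) + emeasure lborel (periodic_supply P a \<Theta> \<inter> {b'..<b' + P})"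
    using periodic_supply_borel by (intro plus_emeasure[symmetric]) auto
  moreover have "ennreal (real N * \<Theta>) + ennreal \<Theta> = ennreal (real (Suc N) * \<Theta>)"
    using \<Theta> by (subst ennreal_plus[symmetric]) (auto simp: algebra_simps)
  ultimately show ?case
    using Suc emeasure_periodic_supply_window[OF P \<Theta>, of a b'] unfolding b'_def by simp
qed

section \<open>EDF scheduling of one sporadic task within a supply set\<close>

lemma fmeasurable_Int_Ico:
  fixes S :: "real set"
  assumes "S \<in> sets borel"
  shows "S \<inter> {a..<b} \<in> fmeasurable lborel"
proof -
  have "{a..<b} \<in> fmeasurable lborel"
    by (rule fmeasurableI2[OF fmeasurable_cbox[of a b]]) auto
  then show ?thesis using fmeasurable_Int_fmeasurable assms by (metis Int_commute sets_lborel)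
qed

lemma measure_Int_Ico_le_add:
  fixes S :: "real set"
  assumes S: "S \<in> sets borel" and "s \<le> t"
  shows "measure lborel (S \<inter> {r..<t}) \<le> measure lborel (S \<inter> {r..<s}) + (t - s)"
proof -
  have "{s..<t} \<in> fmeasurable lborel" using fmeasurable_Int_Ico[of UNIV s t] by simp
  then have "measure lborel (S \<inter> {r..<t}) \<le> measure lborel (S \<inter> {r..<s} \<union> {s..<t})"
    using S by (intro measure_mono_fmeasurable fmeasurable.Un fmeasurable_Int_Ico) auto
  also have "\<dots> \<le> measure lborel (S \<inter> {r..<s}) + measure lborel {s..<t}"
    using S by (intro measure_Un_le) auto
  finally show ?thesis using assms(2) by simp
qed

lemma first_passage_time:
  fixes S :: "real set"
  assumes S: "S \<in> sets borel" and E: "0 < E"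
    and reach: "ennreal E \<le> emeasure lborel (S \<inter> {r..<d})"
  obtains c where "c \<le> d" "ennreal E \<le> emeasure lborel (S \<inter> {r..<c})"
    "\<And>t. t < c \<Longrightarrow> emeasure lborel (S \<inter> {r..<t}) < ennreal E"
proof -
  define G where "G t = measure lborel (S \<inter> {r..<t})" for t
  have emeasure_G: "emeasure lborel (S \<inter> {r..<t}) = ennreal (G t)" for t
    unfolding G_def using fmeasurable_Int_Ico[OF S] by (simp add: emeasure_eq_measure2)
  have G_lipschitz: "G t \<le> G s + (t - s)" if "s \<le> t" for s t
    unfolding G_def using measure_Int_Ico_le_add[OF S that] .
  define L where "L = {t. E \<le> G t}"
  have G_nonneg: "0 \<le> G t" for t unfolding G_def by simp
  have "E \<le> G d" using reach by (simp add: emeasure_G ennreal_le_iff[OF G_nonneg])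
  then have d: "d \<in> L" unfolding L_def by simp
  have "r \<le> t" if "t \<in> L" for t
  proof (rule ccontr)
    assume "\<not> r \<le> t"
    then have "G t = 0" unfolding G_def by simp
    then show False using that E unfolding L_def by simp
  qed
  then have bdd: "bdd_below L" by (rule bdd_belowI)
  define c where "c = Inf L"
  have below: "G t < E" if "t < c" for t
  proof (rule ccontr)
    assume "\<not> G t < E"
    then have "c \<le> t" unfolding c_def L_def using bdd L_def by (intro cInf_lower) auto
    then show False using that by simp
  qed
  have "E \<le> G c"
  proof (rule ccontr)
    assume "\<not> E \<le> G c"
    then have "Inf L < c + (E - G c)" unfolding c_def by simp
    then obtain t where t: "t \<in> L" "t < c + (E - G c)"
      using cInf_less_iff[OF _ bdd] d by blast
    have "c \<le> t" unfolding c_def using t(1) bdd by (rule cInf_lower)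
    then show False using G_lipschitz[of c t] t unfolding L_def by simp
  qed
  moreover have "c \<le> d" unfolding c_def using d bdd by (rule cInf_lower)
  ultimately show thesis
    using that[of c] below E by (simp add: emeasure_G ennreal_lessI ennreal_leI)
qed

text \<open>\<open>J\<close> is the set of execution times of a job of size \<open>E\<close> released at \<open>r\<close>, and \<open>c\<close> the first
  time by which \<open>S\<close> has supplied \<open>E\<close> units after \<open>r\<close>.\<close>
locale job_execution =
  fixes S J :: "real set" and r c E :: real
  assumes S_borel: "S \<in> sets borel" and E_pos: "0 < E"
    and J_supply: "J \<subseteq> S \<inter> {r..}"
    and J_unfinished: "\<And>x. x \<in> J \<Longrightarrow> emeasure lebesgue (J \<inter> {..<x}) < ennreal E"
    and J_greedy: "\<And>x. x \<in> S \<Longrightarrow> r \<le> x \<Longrightarrow> emeasure lebesgue (J \<inter> {..<x}) < ennreal E \<Longrightarrow> x \<in> J"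
    and complete: "ennreal E \<le> emeasure lborel (S \<inter> {r..<c})"
    and incomplete: "\<And>t. t < c \<Longrightarrow> emeasure lborel (S \<inter> {r..<t}) < ennreal E"
begin

lemma supply_before_completion_executed: "S \<inter> {r..<c} \<subseteq> J"
proof
  fix x assume x: "x \<in> S \<inter> {r..<c}"
  have "J \<inter> {..<x} \<subseteq> S \<inter> {r..<x}" using J_supply by auto
  then have "emeasure lebesgue (J \<inter> {..<x}) \<le> emeasure lebesgue (S \<inter> {r..<x})"
    using S_borel by (intro emeasure_mono) auto
  also have "\<dots> = emeasure lborel (S \<inter> {r..<x})" using S_borel by simp
  also have "\<dots> < ennreal E" using x incomplete by simp
  finally show "x \<in> J" using J_greedy x by simp
qed

text \<open>No measurability of \<open>J\<close> is assumed, and a non-measurable set has measure \<open>0\<close>. So the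
  argument below plays off executions after \<open>c\<close>, which make \<open>J \<inter> {..<x}\<close> non-measurable,
  against gaps in \<open>J\<close> after \<open>r\<close>, which make it measurable because its measure is positive.\<close>

lemma execution_prefix_not_measurable:
  assumes "x \<in> J" "c \<le> x"
  shows "J \<inter> {..<x} \<notin> sets lebesgue"
proof
  assume meas: "J \<inter> {..<x} \<in> sets lebesgue"
  have "ennreal E \<le> emeasure lebesgue (S \<inter> {r..<c})" using complete S_borel by simp
  also have "\<dots> \<le> emeasure lebesgue (J \<inter> {..<x})"
    using supply_before_completion_executed assms(2) meas by (intro emeasure_mono) auto
  finally show False using J_unfinished[OF assms(1)] by simp
qed

lemma execution_prefix_measurable_at_gap:
  assumes "x \<in> S" "r \<le> x" "x \<notin> J"
  shows "J \<inter> {..<x} \<in> sets lebesgue"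
proof -
  have "emeasure lebesgue (J \<inter> {..<x}) \<noteq> 0" using J_greedy assms E_pos by force
  then show ?thesis using emeasure_notin_sets by blast
qed

lemma execution_upward_closed:
  assumes "y \<in> J" "c \<le> y" "y < x" "x \<in> S"
  shows "x \<in> J"
proof (rule ccontr)
  assume "x \<notin> J"
  moreover have "r \<le> x" using assms J_supply by force
  ultimately have "J \<inter> {..<x} \<in> sets lebesgue" using execution_prefix_measurable_at_gap assms(4) by blast
  then have "J \<inter> {..<x} \<inter> {..<y} \<in> sets lebesgue" by auto
  moreover have "J \<inter> {..<x} \<inter> {..<y} = J \<inter> {..<y}" using assms(3) by auto
  ultimately show False using execution_prefix_not_measurable assms(1,2) by simp
qed

lemma execution_before_completion:
  assumes x: "x \<in> J"
  shows "x < c"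
proof (rule ccontr)
  assume "\<not> x < c"
  define U where "U = {z. \<exists>y\<in>J. c \<le> y \<and> y \<le> z}"
  have "is_interval U" unfolding is_interval_1 U_def by (auto intro: order_trans)
  then have "U \<in> sets borel" by (rule real_interval_borel_measurable)
  moreover have "J \<inter> {..<x} = (S \<inter> {r..<c}) \<union> (S \<inter> U \<inter> {..<x})"
  proof (intro equalityI subsetI)
    fix z assume z: "z \<in> J \<inter> {..<x}"
    show "z \<in> (S \<inter> {r..<c}) \<union> (S \<inter> U \<inter> {..<x})"
    proof (cases "z < c")
      case True
      then show ?thesis using z J_supply by auto
    next
      case False
      then have "z \<in> U" unfolding U_def using z by (intro CollectI bexI[of _ z]) auto
      then show ?thesis using z J_supply by auto
    qed
  next
    fix z assume z: "z \<in> (S \<inter> {r..<c}) \<union> (S \<inter> U \<inter> {..<x})"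
    show "z \<in> J \<inter> {..<x}"
    proof (cases "z \<in> S \<inter> {r..<c}")
      case True
      then show ?thesis using supply_before_completion_executed \<open>\<not> x < c\<close> by auto
    next
      case False
      then obtain y where "y \<in> J" "c \<le> y" "y \<le> z" "z \<in> S" "z < x"
        using z unfolding U_def by auto
      then show ?thesis using execution_upward_closed[of y z] by (cases "y = z") auto
    qed
  qed
  ultimately have "J \<inter> {..<x} \<in> sets lebesgue" using S_borel by auto
  then show False using execution_prefix_not_measurable x \<open>\<not> x < c\<close> by simp
qed

lemma execution_set_eq: "J = S \<inter> {r..<c}"
  using supply_before_completion_executed execution_before_completion J_supply by auto

end

definition edf_within :: "real set \<Rightarrow> real \<Rightarrow> (nat \<Rightarrow> real) \<Rightarrow> (nat \<Rightarrow> real) \<Rightarrow> (real \<Rightarrow> nat option) \<Rightarrow> bool" where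
  "edf_within S D r e \<sigma> \<longleftrightarrow>
     (\<forall>t k. \<sigma> t = Some k \<longrightarrow> t \<in> S \<and> pending r e \<sigma> k t \<and>
              (\<forall>k'. pending r e \<sigma> k' t \<longrightarrow> r k + D \<le> r k' + D)) \<and>
     (\<forall>t. t \<in> S \<and> (\<exists>k. pending r e \<sigma> k t) \<longrightarrow> \<sigma> t \<noteq> None)"

lemma edf_sched_iff_edf_within:
  "edf_sched n T C i r e \<sigma> \<longleftrightarrow> edf_within (server_supply n T C i) (real (T i)) r e \<sigma>"
  unfolding edf_sched_def edf_within_def ..

lemma edf_withinD:
  assumes "edf_within S D r e \<sigma>" "\<sigma> t = Some k"
  shows "t \<in> S" "pending r e \<sigma> k t" "\<And>k'. pending r e \<sigma> k' t \<Longrightarrow> r k \<le> r k'"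
proof -
  have "t \<in> S \<and> pending r e \<sigma> k t \<and> (\<forall>k'. pending r e \<sigma> k' t \<longrightarrow> r k + D \<le> r k' + D)"
    using assms(1)[unfolded edf_within_def, THEN conjunct1, rule_format, OF assms(2)] .
  then show "t \<in> S" "pending r e \<sigma> k t" "\<And>k'. pending r e \<sigma> k' t \<Longrightarrow> r k \<le> r k'"
    by auto
qed

lemma edf_within_busy:
  assumes "edf_within S D r e \<sigma>" "t \<in> S" "pending r e \<sigma> k t"
  obtains j where "\<sigma> t = Some j"
proof -
  have "\<sigma> t \<noteq> None"
    using assms(1)[unfolded edf_within_def, THEN conjunct2, rule_format] assms(2,3) by blast
  then show thesis using that by auto
qed

lemma work_eq_emeasure_executions:
  "work \<sigma> k x = emeasure lebesgue ({s. \<sigma> s = Some k} \<inter> {..<x})"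
  unfolding work_def by (rule arg_cong[where f = "emeasure lebesgue"]) auto

lemma separated_release_before_deadline:
  fixes r :: "nat \<Rightarrow> real"
  assumes sep: "\<forall>k. r k + D \<le> r (Suc k)" and D: "0 \<le> D" and "j < k"
  shows "r j + D \<le> r k"
proof -
  have mono: "r k \<le> r (Suc k)" for k using sep[rule_format, of k] D by linarith
  have "r (Suc j) \<le> r k" using lift_Suc_mono_le[of r, OF mono] \<open>j < k\<close> by simp
  then show ?thesis using sep[rule_format, of j] by linarith
qed

lemma edf_within_runs_pending_job:
  assumes edf: "edf_within S D r e \<sigma>" and sep: "\<forall>k. r k + D \<le> r (Suc k)" and D: "0 < D"
    and earlier_done: "\<And>j t. j < k \<Longrightarrow> r j + D \<le> t \<Longrightarrow> \<not> pending r e \<sigma> j t"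
    and t: "t \<in> S" "r k \<le> t" "pending r e \<sigma> k t"
  shows "\<sigma> t = Some k"
proof -
  obtain j where j: "\<sigma> t = Some j" using edf_within_busy[OF edf t(1,3)] .
  have j_pending: "pending r e \<sigma> j t" and "r j \<le> r k"
    using edf_withinD[OF edf j] t(3) by auto
  have "\<not> j < k"
  proof
    assume "j < k"
    then have "r j + D \<le> t" using separated_release_before_deadline[OF sep] D t(2) by force
    then show False using earlier_done \<open>j < k\<close> j_pending by blast
  qed
  moreover have "\<not> k < j"
    using separated_release_before_deadline[OF sep, of k j] D \<open>r j \<le> r k\<close> by auto
  ultimately show ?thesis using j by (metis linorder_neqE_nat)
qed

lemma edf_within_completes_by_deadline:
  assumes S: "S \<in> sets borel"
    and supply_bound: "\<And>a. ennreal Cmax \<le> emeasure lborel (S \<inter> {a..<a + D})"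
    and D: "0 < D" and sep: "\<forall>k. r k + D \<le> r (Suc k)" and demand: "\<And>k. e k \<le> Cmax"
    and edf: "edf_within S D r e \<sigma>"
  shows "ennreal (e k) \<le> emeasure lebesgue {s. s \<le> r k + D \<and> \<sigma> s = Some k}
    \<and> (\<forall>t. r k + D \<le> t \<longrightarrow> \<not> pending r e \<sigma> k t)"
proof (induction k rule: less_induct)
  case (less k)
  show ?case
  proof (cases "0 < e k")
    case False
    then have "ennreal (e k) = 0" by (simp add: ennreal_neg)
    then show ?thesis unfolding pending_def by simp
  next
    case True
    define J where "J = {s. \<sigma> s = Some k}"
    have work: "work \<sigma> k x = emeasure lebesgue (J \<inter> {..<x})" for x
      unfolding J_def by (rule work_eq_emeasure_executions)
    have "ennreal (e k) \<le> emeasure lborel (S \<inter> {r k..<r k + D})"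
      using supply_bound[of "r k"] ennreal_leI[OF demand[of k]] by (rule order_trans[rotated])
    then obtain c where c: "c \<le> r k + D" "ennreal (e k) \<le> emeasure lborel (S \<inter> {r k..<c})"
      "\<And>t. t < c \<Longrightarrow> emeasure lborel (S \<inter> {r k..<t}) < ennreal (e k)"
      using first_passage_time[OF S True] by metis
    have "job_execution S J (r k) c (e k)"
    proof (unfold_locales)
      show "J \<subseteq> S \<inter> {r k..}"
        using edf_withinD(1,2)[OF edf] unfolding J_def pending_def by blast
      show "emeasure lebesgue (J \<inter> {..<x}) < ennreal (e k)" if "x \<in> J" for x
        using edf_withinD(2)[OF edf, of x k] that unfolding J_def pending_def work by simp
      show "x \<in> J" if "x \<in> S" "r k \<le> x" "emeasure lebesgue (J \<inter> {..<x}) < ennreal (e k)" for x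
        using edf_within_runs_pending_job[OF edf sep D _ that(1,2)] less that
        unfolding J_def pending_def work by blast
    qed (use S True c in auto)
    then have J: "J = S \<inter> {r k..<c}" by (rule job_execution.execution_set_eq)
    have "{s. s \<le> r k + D \<and> \<sigma> s = Some k} = S \<inter> {r k..<c}"
      using J c(1) unfolding J_def by auto
    moreover have "J \<inter> {..<t} = S \<inter> {r k..<c}" if "r k + D \<le> t" for t
      using J c(1) that by auto
    ultimately show ?thesis
      using c(2) S unfolding pending_def work by (simp add: not_less)
  qed
qed

section \<open>McNaughton's schedule of the server tasks\<close>

lemma partial_sums_cover:
  fixes f :: "nat \<Rightarrow> real"
  assumes "0 \<le> x" "x < (\<Sum>k<N. f k)"
  shows "\<exists>i<N. (\<Sum>k<i. f k) \<le> x \<and> x < (\<Sum>k<Suc i. f k)"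
  using assms
proof (induction N)
  case 0
  then show ?case by simp
next
  case (Suc N)
  show ?case
  proof (cases "x < (\<Sum>k<N. f k)")
    case True
    from Suc.IH[OF Suc.prems(1) True] obtain i
      where "i < N" "(\<Sum>k<i. f k) \<le> x \<and> x < (\<Sum>k<Suc i. f k)" by blast
    then show ?thesis by (intro exI[of _ i]) simp
  next
    case False
    then show ?thesis using Suc.prems by (intro exI[of _ N]) simp
  qed
qed

text \<open>Processor \<open>p\<close> at time \<open>t\<close> is the point \<open>p P + (t mod P)\<close> of McNaughton's line, on which
  the server budgets are laid end to end starting from \<open>0\<close>.\<close>

definition stacked_pos :: "real \<Rightarrow> nat \<Rightarrow> real \<Rightarrow> real" where
  "stacked_pos P p t = real p * P + (t - P * of_int \<lfloor>t / P\<rfloor>)"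

lemma stacked_pos_bounds:
  assumes "0 < P"
  shows "real p * P \<le> stacked_pos P p t" "stacked_pos P p t < real (Suc p) * P"
  using floor_divide_lower[OF assms, of t] floor_divide_upper[OF assms, of t]
  unfolding stacked_pos_def by (simp_all add: algebra_simps)

lemma stacked_pos_diff: "stacked_pos P p t - stacked_pos P q t = (real p - real q) * P"
  unfolding stacked_pos_def by (simp add: algebra_simps)

lemma ex_stacked_pos_iff_ex_shift:
  assumes P: "0 < P" and a: "0 \<le> a"
  shows "(\<exists>p. stacked_pos P p t \<in> {a..<b}) \<longleftrightarrow> (\<exists>j::int. t + of_int j * P \<in> {a..<b})"
proof
  assume "\<exists>p. stacked_pos P p t \<in> {a..<b}"
  then obtain p where "stacked_pos P p t \<in> {a..<b}" ..
  moreover have "stacked_pos P p t = t + of_int (int p - \<lfloor>t / P\<rfloor>) * P"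
    unfolding stacked_pos_def by (simp add: algebra_simps)
  ultimately show "\<exists>j::int. t + of_int j * P \<in> {a..<b}" by metis
next
  assume "\<exists>j::int. t + of_int j * P \<in> {a..<b}"
  then obtain j :: int where j: "t + of_int j * P \<in> {a..<b}" ..
  have "0 \<le> t + of_int j * P" using j a by simp
  also have "t + of_int j * P < (of_int (j + \<lfloor>t / P\<rfloor>) + 1) * P"
    using floor_divide_upper[OF P, of t] by (simp add: algebra_simps)
  finally have "0 < of_int (j + \<lfloor>t / P\<rfloor>) + (1::real)" using P by (simp add: zero_less_mult_iff)
  then have "0 \<le> j + \<lfloor>t / P\<rfloor>" by linarith
  then have "stacked_pos P (nat (j + \<lfloor>t / P\<rfloor>)) t = t + of_int j * P"
    unfolding stacked_pos_def by (simp add: algebra_simps)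
  then show "\<exists>p. stacked_pos P p t \<in> {a..<b}" using j by metis
qed

lemma runs_iff:
  "runs n T C i p t \<longleftrightarrow>
     i < n \<and> stacked_pos (real (Pi_gcd n T)) p t \<in> {offs n T C i..<offs n T C (Suc i)}"
  unfolding runs_def stacked_pos_def offs_def Let_def by auto

lemma Pi_gcd_dvd: "i < n \<Longrightarrow> Pi_gcd n T dvd T i"
  unfolding Pi_gcd_def by (rule Gcd_dvd) simp

lemma offs_Suc: "offs n T C (Suc i) = offs n T C i + Theta n T C i"
  unfolding offs_def by simp

lemma offs_eq_utilization: "offs n T C n = real (Pi_gcd n T) * (\<Sum>i<n. C i / real (T i))"
  unfolding offs_def Theta_def by (simp add: sum_distrib_left)

locale implicit_deadline_tasks =
  fixes n :: nat and T :: "nat \<Rightarrow> nat" and C :: "nat \<Rightarrow> real"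
  assumes period_pos: "\<forall>i<n. 0 < T i"
    and wcet_bounds: "\<forall>i<n. 0 < C i \<and> C i \<le> real (T i)"
begin

lemma Pi_gcd_pos: "0 < n \<Longrightarrow> 0 < Pi_gcd n T"
  using Pi_gcd_dvd[of 0 n T] period_pos by (cases "Pi_gcd n T") auto

lemma Theta_pos: "i < n \<Longrightarrow> 0 < Theta n T C i"
  using Pi_gcd_pos period_pos wcet_bounds unfolding Theta_def by simp

lemma Theta_le_Pi_gcd: "i < n \<Longrightarrow> Theta n T C i \<le> real (Pi_gcd n T)"
  using period_pos wcet_bounds unfolding Theta_def by (simp add: divide_le_eq mult_left_mono)

lemma offs_mono: "i \<le> j \<Longrightarrow> j \<le> n \<Longrightarrow> offs n T C i \<le> offs n T C j"
  unfolding offs_def using Theta_pos by (intro sum_mono2) (auto intro: less_imp_le)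

lemma runs_unique_processor:
  assumes "runs n T C i p t" "runs n T C i q t"
  shows "p = q"
proof -
  define P where "P = real (Pi_gcd n T)"
  have i: "i < n"
    and "offs n T C i \<le> stacked_pos P p t" "stacked_pos P p t < offs n T C i + Theta n T C i"
    and "offs n T C i \<le> stacked_pos P q t" "stacked_pos P q t < offs n T C i + Theta n T C i"
    using assms unfolding P_def by (simp_all add: runs_iff offs_Suc)
  then have "stacked_pos P p t - stacked_pos P q t < P" "stacked_pos P q t - stacked_pos P p t < P"
    using Theta_le_Pi_gcd[OF i] unfolding P_def by linarith+
  then have "(real p - real q) * P < 1 * P" "(real q - real p) * P < 1 * P"
    by (simp_all add: stacked_pos_diff)
  moreover have "0 < P" unfolding P_def using Pi_gcd_pos i by simp
  ultimately have "real p - real q < 1" "real q - real p < 1"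
    by (simp_all only: mult_less_cancel_right_pos)
  then show ?thesis by linarith
qed

lemma runs_unique_server:
  assumes "runs n T C i p t" "runs n T C k p t"
  shows "i = k"
proof -
  have disjoint: False if "i' < k'" "runs n T C i' p t" "runs n T C k' p t" for i' k'
  proof -
    have "k' < n" "offs n T C k' \<le> stacked_pos (real (Pi_gcd n T)) p t"
      "stacked_pos (real (Pi_gcd n T)) p t < offs n T C (Suc i')"
      using that(2,3) by (simp_all add: runs_iff)
    moreover have "offs n T C (Suc i') \<le> offs n T C k'" using that(1) \<open>k' < n\<close> by (intro offs_mono) auto
    ultimately show False by simp
  qed
  show ?thesis using disjoint[of i k] disjoint[of k i] assms by (metis linorder_neqE_nat)
qed

lemma runs_processor_bound:
  assumes U: "(\<Sum>i<n. C i / real (T i)) \<le> real m" and "runs n T C i p t"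
  shows "p < m"
proof -
  have i: "i < n" and "stacked_pos (real (Pi_gcd n T)) p t < offs n T C (Suc i)"
    using assms(2) by (simp_all add: runs_iff)
  moreover have "offs n T C (Suc i) \<le> offs n T C n" using i by (intro offs_mono) auto
  moreover have "offs n T C n \<le> real m * real (Pi_gcd n T)"
    unfolding offs_eq_utilization using mult_right_mono[OF U, of "real (Pi_gcd n T)"]
    by (simp add: mult.commute)
  moreover have P: "0 < real (Pi_gcd n T)" using Pi_gcd_pos i by simp
  ultimately have "real p * real (Pi_gcd n T) < real m * real (Pi_gcd n T)"
    using stacked_pos_bounds(1)[OF P, of p t] by linarith
  then show ?thesis using P by simp
qed

lemma runs_beyond_processors:
  assumes U: "real m < (\<Sum>i<n. C i / real (T i))"
  shows "\<exists>i. runs n T C i m 0"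
proof -
  have "0 < n" using U by (cases n) auto
  then have P: "0 < real (Pi_gcd n T)" using Pi_gcd_pos by simp
  have "real m * real (Pi_gcd n T) < offs n T C n"
    unfolding offs_eq_utilization using U P by (simp add: mult.commute)
  then obtain i where "i < n" "offs n T C i \<le> real m * real (Pi_gcd n T)"
    "real m * real (Pi_gcd n T) < offs n T C (Suc i)"
    using partial_sums_cover[where x = "real m * real (Pi_gcd n T)" and N = n and f = "Theta n T C"] P
    unfolding offs_def by auto
  moreover have "stacked_pos (real (Pi_gcd n T)) m 0 = real m * real (Pi_gcd n T)"
    unfolding stacked_pos_def by simp
  ultimately show ?thesis by (auto simp: runs_iff)
qed

lemma valid_on_iff_utilization: "valid_on n T C m \<longleftrightarrow> (\<Sum>i<n. C i / real (T i)) \<le> real m"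
  unfolding valid_on_def
  using runs_unique_processor runs_unique_server runs_processor_bound runs_beyond_processors
  by (meson lessI not_le less_irrefl)

lemma server_supply_eq:
  assumes i: "i < n"
  shows "server_supply n T C i = periodic_supply (real (Pi_gcd n T)) (offs n T C i) (Theta n T C i)"
proof -
  have P: "0 < real (Pi_gcd n T)" using Pi_gcd_pos i by simp
  have "0 \<le> offs n T C i" using offs_mono[of 0 i] i by (simp add: offs_def)
  then show ?thesis
    unfolding server_supply_def periodic_supply_def runs_iff offs_Suc
    using ex_stacked_pos_iff_ex_shift[OF P] i by auto
qed

lemma emeasure_server_supply_period:
  assumes i: "i < n"
  shows "emeasure lborel (server_supply n T C i \<inter> {a..<a + real (T i)}) = ennreal (C i)"
proof -
  define P where "P = real (Pi_gcd n T)"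
  obtain N where "T i = Pi_gcd n T * N" using Pi_gcd_dvd[OF i] by blast
  then have TN: "real (T i) = real N * P" unfolding P_def by simp
  have P: "0 < P" unfolding P_def using Pi_gcd_pos i by simp
  have "emeasure lborel (periodic_supply P (offs n T C i) (Theta n T C i) \<inter> {a..<a + real N * P})
      = ennreal (real N * Theta n T C i)"
    using P Theta_pos[OF i] Theta_le_Pi_gcd[OF i] unfolding P_def
    by (intro emeasure_periodic_supply_windows) auto
  moreover have "real N * P \<noteq> 0" using period_pos i unfolding TN[symmetric] by simp
  then have "real N * Theta n T C i = C i"
    unfolding Theta_def TN P_def[symmetric] by (simp add: field_simps)
  ultimately show ?thesis unfolding server_supply_eq[OF i] TN P_def by simp
qed

lemma server_meets_deadlines:
  assumes i: "i < n" and adm: "admissible T C i r e" and edf: "edf_sched n T C i r e \<sigma>"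
  shows "meets_deadlines T i r e \<sigma>"
  unfolding meets_deadlines_def
proof
  fix k
  have "server_supply n T C i \<in> sets borel"
    unfolding server_supply_eq[OF i] by (rule periodic_supply_borel)
  moreover have "\<And>a. ennreal (C i) \<le> emeasure lborel (server_supply n T C i \<inter> {a..<a + real (T i)})"
    using emeasure_server_supply_period[OF i] by simp
  moreover have "0 < real (T i)" using period_pos i by simp
  moreover have "\<forall>k. r k + real (T i) \<le> r (Suc k)" "\<And>k. e k \<le> C i"
    using adm unfolding admissible_def by auto
  ultimately show "ennreal (e k) \<le> emeasure lebesgue {s. s \<le> r k + real (T i) \<and> \<sigma> s = Some k}"
    using edf_within_completes_by_deadline edf[unfolded edf_sched_iff_edf_within] by blast
qed

end

theorem theorem6:
  fixes n m :: nat and T :: "nat \<Rightarrow> nat" and C :: "nat \<Rightarrow> real"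
  assumes "\<forall>i<n. 0 < T i"
    and "\<forall>i<n. 0 < C i \<and> C i \<le> real (T i)"
    and "0 < m"
  shows "VC_IDT_schedulable n T C m \<longleftrightarrow> (\<Sum>i<n. C i / real (T i)) \<le> real m"
proof -
  interpret implicit_deadline_tasks n T C
    using assms(1,2) by unfold_locales
  show ?thesis
    unfolding VC_IDT_schedulable_def valid_on_iff_utilization using server_meets_deadlines by simp
qed

end
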